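(* Let $U\in\mathcal U_n$ and let $U'\in\mathcal U_{n+1}$ be obtained from $U$ by adding an $(n+1)$-st unit interval $I_{n+1}$ to the right of the intervals of $U$; let $\ell$ be the level of $n+1$ in $U'$. The area sequence of $p(U')$ is obtained from that of $p(U)$ by inserting one letter equal to $\ell$. Let $r$ be the number of occurrences of the letter $\ell$ in the area sequence of $p(U)$ plus the number of occurrences of the letter $\ell-1$ appearing after the position of this inserted letter $\ell$ in the area sequence of $p(U')$. Then $\zeta(p(U'))$ is obtained from $\zeta(p(U))$ by adding a final peak in position $(n-r,n+1)$.
   Context: A unit interval order on $\{1,\dots,n\}$ is given by closed intervals $I_1,\dots,I_n$ of length $1$, numbered from left to right, with $i\prec j$ iff $I_i$ lies strictly to the left of $I_j$; $\mathcal U_n$ is the set of these; adding $I_{n+1}$ to the right means $I_1,\dots,I_{n+1}$ remain numbered from left to right. Levels in $U'$: $\ell(1)=0$, and $\ell(j)=\max_{i\prec j}\ell(i)+1$ (or $0$ if no $i\prec j$). A Dyck path of length $n$ is a lattice path from $(0,0)$ to $(n,n)$ with up steps $a$ and right steps $b$ never going below $y=x$; its area sequence lists row by row from bottom to top the number of unit boxes between path and diagonal. For a nonnegative integer sequence $w$, $P(w)$ is the poset on $\{1,\dots,n\}$ with $i\prec j$ iff $w_j-w_i\ge 2$, or $w_j-w_i=1$ and $i<j$. For each $U\in\mathcal U_n$ there is a unique $w$ that is the area sequence of a Dyck path with $P(w)\cong U$; $p(U)$ is the Dyck path with area sequence $w$. The zeta map: label the top endpoint of each up step of $D$ by $a$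 and the right endpoint of each right step by $b$; read the labels along $y=x$ from bottom-left to top-right, then along $y=x+1$, then $y=x+2$, etc.; reading $b$ as an up step and $a$ as a right step gives $\zeta(D)$. Adding a final peak in position $(i,n+1)$ to a Dyck path $D$ of length $n$ means: $D$ passes through $(i,n)$, and the new path of length $n+1$ follows $D$ up to $(i,n)$, then takes an up step to $(i,n+1)$, then right steps to $(n+1,n+1)$. *)

theory Defs
  imports Main "HOL.Real"
begin

text \<open>A unit interval order on {1..N} is given by the left endpoints x 1 \<le> ... \<le> x N
  of closed unit intervals [x i, x i + 1], numbered from left to right;
  i precedes j iff interval i lies strictly to the left of interval j.\<close>

definition sorted_endpoints :: "(nat \<Rightarrow> real) \<Rightarrow> nat \<Rightarrow> bool" where
  "sorted_endpoints x N \<longleftrightarrow> (\<forall>i j. 1 \<le> i \<longrightarrow> i \<le> j \<longrightarrow> j \<le> N \<longrightarrow> x i \<le> x j)"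

definition uio_prec :: "(nat \<Rightarrow> real) \<Rightarrow> nat \<Rightarrow> nat \<Rightarrow> bool" where
  "uio_prec x i j \<longleftrightarrow> x i + 1 < x j"

text \<open>In a unit interval order numbered from left to right every predecessor i of j
  satisfies 1 \<le> i < j, so the maximum ranges over i in {1..<j}.\<close>

fun level :: "(nat \<Rightarrow> nat \<Rightarrow> bool) \<Rightarrow> nat \<Rightarrow> nat" where
  "level R j = fold max (map (\<lambda>i. Suc (level R i)) (filter (\<lambda>i. R i j) [1..<j])) 0"

text \<open>A path is a list of steps: True = up step a, False = right step b.\<close>

definition dyck_path :: "nat \<Rightarrow> bool list \<Rightarrow> bool" where
  "dyck_path n D \<longleftrightarrow> length D = 2 * n \<and> count_list D True = n \<and>
     (\<forall>k \<le> length D. count_list (take k D) False \<le> count_list (take k D) True)"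

text \<open>Area sequence: for the up step in row u+1 (starting at height u) beginning at
  x-coordinate r, the number of full boxes between the path and the diagonal is u - r.\<close>

fun area_aux :: "nat \<Rightarrow> nat \<Rightarrow> bool list \<Rightarrow> nat list" where
  "area_aux u r [] = []"
| "area_aux u r (True # D) = (u - r) # area_aux (Suc u) r D"
| "area_aux u r (False # D) = area_aux u (Suc r) D"

definition area_seq :: "bool list \<Rightarrow> nat list" where
  "area_seq D = area_aux 0 0 D"

text \<open>P(w) on {1..n} (list w is 0-indexed, so w_i = w ! (i - 1)).\<close>

definition Pw :: "nat list \<Rightarrow> nat \<Rightarrow> nat \<Rightarrow> bool" where
  "Pw w i j \<longleftrightarrow> (int (w ! (j - 1)) - int (w ! (i - 1)) \<ge> 2 \<or>
                  (int (w ! (j - 1)) - int (w ! (i - 1)) = 1 \<and> i < j))"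

definition poset_iso :: "nat \<Rightarrow> (nat \<Rightarrow> nat \<Rightarrow> bool) \<Rightarrow> (nat \<Rightarrow> nat \<Rightarrow> bool) \<Rightarrow> bool" where
  "poset_iso n R S \<longleftrightarrow> (\<exists>f. bij_betw f {1..n} {1..n} \<and>
      (\<forall>i\<in>{1..n}. \<forall>j\<in>{1..n}. R i j \<longleftrightarrow> S (f i) (f j)))"

definition pmap :: "nat \<Rightarrow> (nat \<Rightarrow> nat \<Rightarrow> bool) \<Rightarrow> bool list" where
  "pmap n R = (THE D. dyck_path n D \<and> poset_iso n (Pw (area_seq D)) R)"

text \<open>After step t (0-indexed) the path is at (x_t, y_t); this lattice point carries the
  label of step t.  Labels are read diagonal by diagonal (y - x = 0, 1, 2, ...), and along
  each diagonal from bottom-left to top-right, i.e. in increasing t.  Then b (False)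
  becomes an up step (True) and a (True) becomes a right step (False).\<close>

definition diag_after :: "bool list \<Rightarrow> nat \<Rightarrow> int" where
  "diag_after D t = int (count_list (take (Suc t) D) True) - int (count_list (take (Suc t) D) False)"

definition zeta :: "bool list \<Rightarrow> bool list" where
  "zeta D = map (\<lambda>t. \<not> D ! t)
     (concat (map (\<lambda>k. filter (\<lambda>t. diag_after D t = k) [0..<length D]) [0..int (length D)]))"

text \<open>Adding a final peak in position (i, n+1) to a Dyck path D of length n:
  D passes through (i,n), and D' follows D to (i,n), then one up step, then right steps.\<close>

definition add_final_peak :: "nat \<Rightarrow> bool list \<Rightarrow> nat \<Rightarrow> bool list \<Rightarrow> bool" where
  "add_final_peak n D i D' \<longleftrightarrow> i \<le> n \<and> count_list (take (n + i) D) True = n \<and>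
     D' = take (n + i) D @ True # replicate (Suc n - i) False"

end

theory Submission
  imports Defs "HOL-Library.Multiset" "HOL-Library.Product_Lexorder"
begin

text \<open>
  We build p(U) interval by interval. Along with the area sequence w of p(U) we keep an
  isomorphism f of U with P(w) that sends every interval to a letter equal to its level and keeps
  intervals of equal level in their left-to-right order. When I_(n+1), of level l, is added, the
  letter l is inserted right behind the last letter that has to precede it (the letters of
  intervals of level l and of the predecessors of n + 1 of level l - 1), and f extends to such an
  isomorphism for the new sequence. This sequence is the area sequence of p(U'), because P(w)
  determines a Dyck area sequence w: the multiset of pairs (w_j, number of earlier letters
  w_j - 1) is an isomorphism invariant of P(w) from which w can be rebuilt, and a Dyck path is
  determined by its area sequence.

  On the other side, zeta reads the area sequence diagonal by diagonal: diagonal k contributes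
  the letters k and k - 1 of w in their order, as up and right steps. All letters are at most l
  and none behind the insertion point equals l, so zeta p(U) is a word B followed by r right
  steps (one for each letter l and each letter l - 1 behind the insertion point), while
  zeta p(U') is B followed by an up step and r + 1 right steps: a final peak at (n - r, n + 1).
\<close>

section \<open>Dyck paths and area sequences\<close>

lemma count_list_replicate [simp]: "count_list (replicate k a) b = (if a = b then k else 0)"
  by (induction k) auto

lemma length_bool_list: "length (D :: bool list) = count_list D True + count_list D False"
  by (induction D) auto

fun rises_le_one :: "nat list \<Rightarrow> bool" where
  "rises_le_one (a # b # w) \<longleftrightarrow> b \<le> Suc a \<and> rises_le_one (b # w)"
| "rises_le_one _ \<longleftrightarrow> True"

definition dyck_area :: "nat list \<Rightarrow> bool" where
  "dyck_area w \<longleftrightarrow> w = [] \<or> hd w = 0 \<and> rises_le_one w"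

lemma rises_le_one_iff_nth:
  "rises_le_one w \<longleftrightarrow> (\<forall>i. Suc i < length w \<longrightarrow> w ! Suc i \<le> Suc (w ! i))"
  by (induction w rule: rises_le_one.induct) (auto simp: nth_Cons split: nat.splits)

lemma dyck_area_iff_nth:
  "dyck_area w \<longleftrightarrow> (\<forall>i < length w. w ! i \<le> (if i = 0 then 0 else Suc (w ! (i - 1))))"
  unfolding dyck_area_def rises_le_one_iff_nth
  by (cases w) (auto simp: nth_Cons split: nat.splits)

lemma dyck_area_nth_le: "dyck_area w \<Longrightarrow> i < length w \<Longrightarrow> w ! i \<le> i"
proof (induction i)
  case (Suc i)
  then show ?case
    by (fastforce simp: dyck_area_iff_nth)
qed (auto simp: dyck_area_iff_nth)

fun path_of_area :: "nat list \<Rightarrow> bool list" where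
  "path_of_area [] = []"
| "path_of_area [a] = True # replicate (Suc a) False"
| "path_of_area (a # b # w) = True # replicate (Suc a - b) False @ path_of_area (b # w)"

lemma area_aux_replicate_False: "area_aux u r (replicate k False @ D) = area_aux u (r + k) D"
  by (induction k arbitrary: r) auto

lemma area_aux_path_of_area:
  "rises_le_one (a # w) \<Longrightarrow> u = r + a \<Longrightarrow> area_aux u r (path_of_area (a # w)) = a # w"
proof (induction w arbitrary: a u r)
  case Nil
  then show ?case
    using area_aux_replicate_False[of _ _ _ "[]"] by simp
next
  case (Cons b w)
  then show ?case
    using Cons.IH[of b "Suc u" "r + (Suc a - b)"] by (simp add: area_aux_replicate_False)
qed

lemma area_seq_path_of_area: "dyck_area w \<Longrightarrow> area_seq (path_of_area w) = w"
  by (cases w) (auto simp: dyck_area_def area_seq_def area_aux_path_of_area)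

lemma count_path_of_area:
  assumes "rises_le_one (a # w)"
  shows "count_list (path_of_area (a # w)) True = Suc (length w)"
    and "count_list (path_of_area (a # w)) False = Suc (length w) + a"
  using assms by (induction w arbitrary: a) auto

lemma count_take_le: "count_list (take j xs) y \<le> count_list xs y"
  by (metis append_take_drop_id count_list_append le_add1)

lemma path_of_area_prefix:
  "rises_le_one (a # w) \<Longrightarrow>
   count_list (take k (path_of_area (a # w))) False \<le>
   count_list (take k (path_of_area (a # w))) True + a"
proof (induction w arbitrary: a k)
  case Nil
  then show ?case
    using count_take_le[of "k - 1" "replicate (Suc a) False" False] by (cases k) auto
next
  case (Cons b w)
  show ?case
  proof (cases k)
    case (Suc k')
    define m where "m = Suc a - b"
    have "take k (path_of_area (a # b # w)) =
        True # take k' (replicate m False) @ take (k' - m) (path_of_area (b # w))"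
      using Suc by (simp add: m_def take_append)
    then show ?thesis
      using Cons.IH[of b "k' - m"] Cons.prems by (simp add: m_def min_def) arith
  qed simp
qed

lemma dyck_path_path_of_area: "dyck_area w \<Longrightarrow> dyck_path (length w) (path_of_area w)"
proof (cases w)
  case (Cons a w')
  assume "dyck_area w"
  then have "a = 0" and rises: "rises_le_one (a # w')"
    using Cons by (auto simp: dyck_area_def)
  then show ?thesis
    unfolding dyck_path_def Cons
    using count_path_of_area[OF rises] path_of_area_prefix[OF rises]
      length_bool_list[of "path_of_area (a # w')"]
    by auto
qed (simp add: dyck_path_def)

text \<open>D, started at the point (r, u), stays weakly above the diagonal and ends on it.\<close>

definition dyck_from :: "nat \<Rightarrow> nat \<Rightarrow> bool list \<Rightarrow> bool" where
  "dyck_from u r D \<longleftrightarrow>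
     (\<forall>k \<le> length D. r + count_list (take k D) False \<le> u + count_list (take k D) True) \<and>
     u + count_list D True = r + count_list D False"

lemma dyck_path_dyck_from: "dyck_path n D \<Longrightarrow> dyck_from 0 0 D"
  unfolding dyck_path_def dyck_from_def using length_bool_list[of D] by auto

lemma dyck_from_le: "dyck_from u r D \<Longrightarrow> r \<le> u"
  unfolding dyck_from_def by (metis add_0_right count_list.simps(1) le0 take_0)

lemma dyck_from_True: "dyck_from u r (True # D) \<Longrightarrow> dyck_from (Suc u) r D"
  unfolding dyck_from_def by (auto dest!: spec[of _ "Suc k" for k])

lemma dyck_from_False: "dyck_from u r (False # D) \<Longrightarrow> dyck_from u (Suc r) D"
  unfolding dyck_from_def by (auto dest!: spec[of _ "Suc k" for k])

lemma area_aux_eq_Nil_iff: "area_aux u r D = [] \<longleftrightarrow> True \<notin> set D"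
  by (induction u r D rule: area_aux.induct) auto

lemma dyck_from_no_True: "dyck_from u r D \<Longrightarrow> True \<notin> set D \<Longrightarrow> u = r + length D"
  unfolding dyck_from_def using length_bool_list[of D] by (simp add: count_list_0_iff)

lemma hd_area_aux_False:
  "dyck_from u r (False # D) \<Longrightarrow> True \<in> set D \<Longrightarrow> hd (area_aux u r (False # D)) < u - r"
proof (induction D arbitrary: r)
  case (Cons s D)
  then have "dyck_from u (Suc r) (s # D)"
    using dyck_from_False by blast
  with Cons show ?case
    using dyck_from_le by (cases s) fastforce+
qed simp

lemma area_aux_True_neq_False:
  assumes "dyck_from u r (False # D)"
  shows "area_aux u r (True # D') \<noteq> area_aux u r (False # D)"
proof
  assume eq: "area_aux u r (True # D') = area_aux u r (False # D)"
  then have "area_aux u (Suc r) D \<noteq> []"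
    by auto
  then have "True \<in> set D"
    by (simp add: area_aux_eq_Nil_iff)
  then have "hd (area_aux u r (False # D)) < u - r"
    using hd_area_aux_False assms by blast
  then show False
    using eq[symmetric] by simp
qed

lemma area_aux_inj:
  "dyck_from u r D1 \<Longrightarrow> dyck_from u r D2 \<Longrightarrow> area_aux u r D1 = area_aux u r D2 \<Longrightarrow> D1 = D2"
proof (induction D1 arbitrary: u r D2)
  case Nil
  then have "True \<notin> set D2"
    using area_aux_eq_Nil_iff[of u r D2] by simp
  then show ?case
    using dyck_from_no_True[OF Nil.prems(1)] dyck_from_no_True[OF Nil.prems(2)] by simp
next
  case (Cons s D1)
  show ?case
  proof (cases D2)
    case Nil
    then have "True \<notin> set (s # D1)"
      using Cons.prems(3) by (simp add: area_aux_eq_Nil_iff)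
    then show ?thesis
      using dyck_from_no_True[OF Cons.prems(1)] dyck_from_no_True[OF Cons.prems(2)] Nil by simp
  next
    case (Cons t D2')
    consider "s = t" | "s" "\<not> t" | "\<not> s" "t"
      by blast
    then show ?thesis
    proof cases
      case 1
      then show ?thesis
        using Cons.prems \<open>D2 = t # D2'\<close> Cons.IH[of "Suc u" r D2'] Cons.IH[of u "Suc r" D2']
          dyck_from_True[of u r] dyck_from_False[of u r]
        by (cases s) auto
    next
      case 2
      then show ?thesis
        using area_aux_True_neq_False[of u r D2' D1] Cons.prems \<open>D2 = t # D2'\<close> by simp
    next
      case 3
      then show ?thesis
        using area_aux_True_neq_False[of u r D1 D2'] Cons.prems \<open>D2 = t # D2'\<close> by simp
    qed
  qed
qed

lemma area_seq_inj:
  "dyck_path n D1 \<Longrightarrow> dyck_path n D2 \<Longrightarrow> area_seq D1 = area_seq D2 \<Longrightarrow> D1 = D2"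
  unfolding area_seq_def using area_aux_inj dyck_path_dyck_from by blast

lemma length_area_aux: "length (area_aux u r D) = count_list D True"
  by (induction u r D rule: area_aux.induct) auto

lemma area_aux_Cons_bound:
  "dyck_from u r D \<Longrightarrow> area_aux u r D = a # w \<Longrightarrow> a \<le> u - r \<and> rises_le_one (a # w)"
proof (induction D arbitrary: u r a w)
  case (Cons s D)
  note IH = Cons.IH
  show ?case
  proof (cases s)
    case True
    then have D: "dyck_from (Suc u) r D"
      using Cons.prems(1) dyck_from_True[of u r D] by simp
    have "rises_le_one ((u - r) # area_aux (Suc u) r D)"
    proof (cases "area_aux (Suc u) r D")
      case (Cons b v)
      then show ?thesis
        using IH[OF D Cons] dyck_from_le[OF Cons.prems(1)] by (simp add: Suc_diff_le)
    qed simp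
    then show ?thesis
      using Cons.prems(2) True by auto
  next
    case False
    with Cons show ?thesis
      using dyck_from_False by fastforce
  qed
qed simp

lemma dyck_area_area_seq: "dyck_path n D \<Longrightarrow> dyck_area (area_seq D)"
  unfolding dyck_area_def area_seq_def
  using area_aux_Cons_bound[OF dyck_path_dyck_from] by (cases "area_aux 0 0 D") auto

lemma length_area_seq: "dyck_path n D \<Longrightarrow> length (area_seq D) = n"
  unfolding dyck_path_def area_seq_def by (simp add: length_area_aux)

section \<open>The zeta map read off the area sequence\<close>

text \<open>Reading diagonal k of D contributes to zeta D the subword of the area sequence formed by
  its letters k and k - 1, a letter k becoming an up step and a letter k - 1 a right step.\<close>

definition level_word :: "nat \<Rightarrow> nat list \<Rightarrow> bool list" where
  "level_word k w = map (\<lambda>a. a = k) (filter (\<lambda>a. a = k \<or> Suc a = k) w)"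

definition diagonal_word :: "nat \<Rightarrow> bool list \<Rightarrow> bool list" where
  "diagonal_word k D = map (\<lambda>t. \<not> D ! t) (filter (\<lambda>t. diag_after D t = int k) [0..<length D])"

lemma level_word_append [simp]: "level_word k (v @ w) = level_word k v @ level_word k w"
  by (simp add: level_word_def)

lemma level_word_singleton: "level_word k [a] = (if a = k \<or> Suc a = k then [a = k] else [])"
  by (simp add: level_word_def)

lemma area_aux_snoc:
  "area_aux u r (D @ [s]) =
   area_aux u r D @ (if s then [u + count_list D True - (r + count_list D False)] else [])"
  by (induction u r D rule: area_aux.induct) auto

lemma diagonal_word_snoc:
  "diagonal_word k (D @ [s]) = diagonal_word k D @
     (if int (count_list (D @ [s]) True) - int (count_list (D @ [s]) False) = int k
      then [\<not> s] else [])"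
proof -
  have "filter (\<lambda>t. diag_after (D @ [s]) t = int k) [0..<length D] =
        filter (\<lambda>t. diag_after D t = int k) [0..<length D]"
    by (rule filter_cong) (auto simp: diag_after_def)
  moreover have "map (\<lambda>t. \<not> (D @ [s]) ! t) (filter (\<lambda>t. diag_after D t = int k) [0..<length D]) =
      map (\<lambda>t. \<not> D ! t) (filter (\<lambda>t. diag_after D t = int k) [0..<length D])"
    by (rule map_cong) (auto simp: nth_append)
  ultimately show ?thesis
    by (simp add: diagonal_word_def diag_after_def)
qed

lemma above_diagonal_butlast:
  "\<forall>k \<le> length (P @ [s]). count_list (take k (P @ [s])) False \<le> count_list (take k (P @ [s])) True
   \<Longrightarrow> \<forall>k \<le> length P. count_list (take k P) False \<le> count_list (take k P) True"
  by (metis le_SucI length_append_singleton take_all_iff take_append take_eq_Nil2 append_Nil2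
      diff_is_0_eq)

lemma level_word_area_seq:
  assumes "\<forall>k \<le> length P. count_list (take k P) False \<le> count_list (take k P) True"
  shows "level_word k (area_seq P) = diagonal_word k P @
    (if Suc k \<le> count_list P True - count_list P False then [True] else [])"
  using assms
proof (induction P arbitrary: k rule: rev_induct)
  case Nil
  then show ?case
    by (simp add: level_word_def diagonal_word_def area_seq_def)
next
  case (snoc s P)
  have above: "\<forall>k \<le> length P. count_list (take k P) False \<le> count_list (take k P) True"
    using above_diagonal_butlast snoc.prems by blast
  have "count_list (P @ [s]) False \<le> count_list (P @ [s]) True"
    using snoc.prems by (metis order_refl take_all)
  moreover have "count_list P False \<le> count_list P True"
    using above by (metis order_refl take_all)
  moreover note IH = snoc.IH[OF above]
  ultimately show ?case
    by (cases s) (auto simp: area_seq_def area_aux_snoc level_word_singleton diagonal_word_snoc)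
qed

lemma upto_0_int: "[0..int L] = map int [0..<Suc L]"
  by (induction L) (simp_all add: upto_rec2)

theorem zeta_eq_level_words:
  assumes "dyck_path n D"
  shows "zeta D = concat (map (\<lambda>k. level_word k (area_seq D)) [0..<Suc (length D)])"
proof -
  have "level_word k (area_seq D) = diagonal_word k D" for k
    using level_word_area_seq[of D k] assms length_bool_list[of D] by (simp add: dyck_path_def)
  then show ?thesis
    unfolding zeta_def diagonal_word_def upto_0_int map_concat by (simp add: comp_def)
qed

section \<open>An area sequence is determined by its poset\<close>

definition iso_on :: "nat \<Rightarrow> (nat \<Rightarrow> nat) \<Rightarrow> (nat \<Rightarrow> nat \<Rightarrow> bool) \<Rightarrow> (nat \<Rightarrow> nat \<Rightarrow> bool) \<Rightarrow> bool" where
  "iso_on N f R S \<longleftrightarrow> bij_betw f {1..N} {1..N} \<and> (\<forall>i\<in>{1..N}. \<forall>j\<in>{1..N}. R i j \<longleftrightarrow> S (f i) (f j))"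

lemma poset_iso_iff_iso_on: "poset_iso N R S \<longleftrightarrow> (\<exists>f. iso_on N f R S)"
  unfolding poset_iso_def iso_on_def ..

lemma iso_on_in: "iso_on N f R S \<Longrightarrow> v \<in> {1..N} \<Longrightarrow> f v \<in> {1..N}"
  unfolding iso_on_def by (elim conjE bij_betw_apply)

lemma iso_on_trans:
  assumes "iso_on N f R S" and "iso_on N g S T"
  shows "iso_on N (g \<circ> f) R T"
proof -
  have "bij_betw (g \<circ> f) {1..N} {1..N}"
    using assms unfolding iso_on_def by (elim conjE) (rule bij_betw_trans)
  moreover have "R i j \<longleftrightarrow> T (g (f i)) (g (f j))" if "i \<in> {1..N}" "j \<in> {1..N}" for i j
    using assms iso_on_in[OF assms(1) that(1)] iso_on_in[OF assms(1) that(2)] that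
    unfolding iso_on_def by simp
  ultimately show ?thesis
    unfolding iso_on_def by simp
qed

lemma iso_on_inv:
  assumes "iso_on N f R S"
  shows "iso_on N (inv_into {1..N} f) S R"
proof -
  have f: "bij_betw f {1..N} {1..N}"
    and rel: "\<forall>i\<in>{1..N}. \<forall>j\<in>{1..N}. R i j \<longleftrightarrow> S (f i) (f j)"
    using assms unfolding iso_on_def by auto
  have g: "bij_betw (inv_into {1..N} f) {1..N} {1..N}"
    using f by (rule bij_betw_inv_into)
  have "S i j \<longleftrightarrow> R (inv_into {1..N} f i) (inv_into {1..N} f j)"
    if "i \<in> {1..N}" "j \<in> {1..N}" for i j
    using rel bij_betw_apply[OF g that(1)] bij_betw_apply[OF g that(2)]
      bij_betw_inv_into_right[OF f that(1)] bij_betw_inv_into_right[OF f that(2)]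
    by simp
  with g show ?thesis
    unfolding iso_on_def by simp
qed

fun chain_below :: "(nat \<Rightarrow> nat \<Rightarrow> bool) \<Rightarrow> nat \<Rightarrow> nat \<Rightarrow> nat \<Rightarrow> bool" where
  "chain_below R N 0 v \<longleftrightarrow> v \<in> {1..N}"
| "chain_below R N (Suc k) v \<longleftrightarrow> v \<in> {1..N} \<and> (\<exists>u\<in>{1..N}. R u v \<and> chain_below R N k u)"

lemma chain_below_iso_on:
  assumes iso: "iso_on N f R S" and v: "v \<in> {1..N}"
  shows "chain_below R N k v \<longleftrightarrow> chain_below S N k (f v)"
  using v
proof (induction k arbitrary: v)
  case 0
  then show ?case
    using iso_on_in[OF iso] by simp
next
  case (Suc k)
  have bij: "bij_betw f {1..N} {1..N}"
    and rel: "\<And>i j. i \<in> {1..N} \<Longrightarrow> j \<in> {1..N} \<Longrightarrow> R i j \<longleftrightarrow> S (f i) (f j)"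
    using iso unfolding iso_on_def by auto
  have surj: "f ` {1..N} = {1..N}"
    using bij by (simp add: bij_betw_def)
  have "(\<exists>u\<in>{1..N}. R u v \<and> chain_below R N k u) \<longleftrightarrow>
        (\<exists>u\<in>{1..N}. S (f u) (f v) \<and> chain_below S N k (f u))"
    using Suc rel by auto
  also have "\<dots> \<longleftrightarrow> (\<exists>u'\<in>f ` {1..N}. S u' (f v) \<and> chain_below S N k u')"
    by simp
  also have "\<dots> \<longleftrightarrow> (\<exists>u'\<in>{1..N}. S u' (f v) \<and> chain_below S N k u')"
    by (simp only: surj)
  finally show ?case
    using Suc.prems iso_on_in[OF iso] by simp
qed

lemma dyck_area_earlier_value:
  "dyck_area w \<Longrightarrow> i < length w \<Longrightarrow> m < w ! i \<Longrightarrow> \<exists>i' < i. w ! i' = m"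
proof (induction i)
  case 0
  then show ?case
    by (auto simp: dyck_area_iff_nth)
next
  case (Suc i)
  then have "m \<le> w ! i"
    by (fastforce simp: dyck_area_iff_nth)
  with Suc show ?case
    by (metis le_neq_implies_less less_SucI lessI Suc_lessD)
qed

lemma Pw_less: "Pw w i j \<Longrightarrow> w ! (i - 1) < w ! (j - 1)"
  unfolding Pw_def by auto

lemma chain_below_Pw_iff:
  assumes "dyck_area w" and "length w = N" and "j \<in> {1..N}"
  shows "chain_below (Pw w) N k j \<longleftrightarrow> k \<le> w ! (j - 1)"
  using assms(3)
proof (induction k arbitrary: j)
  case (Suc k)
  show ?case
  proof
    assume "chain_below (Pw w) N (Suc k) j"
    then obtain u where "u \<in> {1..N}" "Pw w u j" "chain_below (Pw w) N k u"
      by auto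
    then show "Suc k \<le> w ! (j - 1)"
      using Suc.IH[of u] Pw_less[of w u j] by simp
  next
    assume k: "Suc k \<le> w ! (j - 1)"
    have "j - 1 < length w" and "w ! (j - 1) - 1 < w ! (j - 1)"
      using Suc.prems assms(2) k by auto
    then obtain i where i: "i < j - 1" "w ! i = w ! (j - 1) - 1"
      using dyck_area_earlier_value[OF assms(1)] by blast
    then have "Pw w (Suc i) j"
      using k by (auto simp: Pw_def)
    moreover have "chain_below (Pw w) N k (Suc i)"
      using Suc.IH[of "Suc i"] Suc.prems i k by auto
    ultimately show "chain_below (Pw w) N (Suc k) j"
      using Suc.prems i by auto
  qed
qed simp

lemma iso_on_Pw_values:
  assumes "dyck_area w1" "dyck_area w2" "length w1 = N" "length w2 = N"
    and iso: "iso_on N h (Pw w1) (Pw w2)" and j: "j \<in> {1..N}"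
  shows "w2 ! (h j - 1) = w1 ! (j - 1)"
proof -
  have "h j \<in> {1..N}"
    using iso_on_in[OF iso j] .
  then have "k \<le> w1 ! (j - 1) \<longleftrightarrow> k \<le> w2 ! (h j - 1)" for k
    using chain_below_iso_on[OF iso j, of k] chain_below_Pw_iff[OF assms(1,3) j, of k]
      chain_below_Pw_iff[OF assms(2,4), of "h j" k]
    by simp
  then show ?thesis
    by (meson le_antisym order_refl)
qed

definition lower_before :: "nat list \<Rightarrow> nat \<Rightarrow> nat" where
  "lower_before w q = length (filter (\<lambda>a. Suc a = w ! q) (take q w))"

lemma mset_map_upt_eq_image_mset:
  "mset (map g [0..<n]) = image_mset (\<lambda>i. g (i - 1)) (mset_set {1..n})"
proof -
  have "[Suc 0..<Suc n] = map Suc [0..<n]"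
    by (rule map_Suc_upt[symmetric])
  then have "map g [0..<n] = map (\<lambda>i. g (i - 1)) [Suc 0..<Suc n]"
    by (simp only: map_map comp_def diff_Suc_1)
  then show ?thesis
    by (simp del: upt_Suc add: atLeastLessThanSuc_atLeastAtMost)
qed

lemma card_filter_nth: "card {i \<in> {1..length w}. P (w ! (i - 1))} = length (filter P w)"
proof -
  have "{i \<in> {1..length w}. P (w ! (i - 1))} = Suc ` {i. i < length w \<and> P (w ! i)}"
  proof (intro equalityI subsetI)
    fix i
    assume "i \<in> {i \<in> {1..length w}. P (w ! (i - 1))}"
    then have "i = Suc (i - 1)" and "i - 1 \<in> {i. i < length w \<and> P (w ! i)}"
      by auto
    then show "i \<in> Suc ` {i. i < length w \<and> P (w ! i)}"
      by (rule image_eqI)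
  qed auto
  then show ?thesis
    by (simp add: card_image length_filter_conv_card)
qed

lemma card_Pw_below:
  assumes "length w = N" and "j \<in> {1..N}"
  shows "card {i \<in> {1..N}. Pw w i j} =
    length (filter (\<lambda>a. a + 2 \<le> w ! (j - 1)) w) + lower_before w (j - 1)"
proof -
  define A where "A = {i \<in> {1..N}. w ! (i - 1) + 2 \<le> w ! (j - 1)}"
  define B where "B = {i \<in> {1..N}. i < j \<and> Suc (w ! (i - 1)) = w ! (j - 1)}"
  have "{i \<in> {1..N}. Pw w i j} = A \<union> B"
    unfolding A_def B_def Pw_def by auto
  moreover have "A \<inter> B = {}"
    unfolding A_def B_def by auto
  moreover have "card A = length (filter (\<lambda>a. a + 2 \<le> w ! (j - 1)) w)"
    unfolding A_def using card_filter_nth[where P = "\<lambda>a. a + 2 \<le> w ! (j - 1)" and w = w] assms(1)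
    by simp
  moreover have "card B = lower_before w (j - 1)"
  proof -
    have "B = {i \<in> {1..length (take (j - 1) w)}. Suc (take (j - 1) w ! (i - 1)) = w ! (j - 1)}"
      unfolding B_def using assms by auto
    then show ?thesis
      unfolding lower_before_def
      using card_filter_nth[where w = "take (j - 1) w" and P = "\<lambda>a. Suc a = w ! (j - 1)"]
      by (simp only:)
  qed
  ultimately show ?thesis
    by (simp add: card_Un_disjoint A_def B_def)
qed

lemma card_below_iso_on:
  assumes iso: "iso_on N f R S" and v: "v \<in> {1..N}"
  shows "card {i \<in> {1..N}. R i v} = card {i \<in> {1..N}. S i (f v)}"
proof -
  have bij: "bij_betw f {1..N} {1..N}"
    and rel: "\<And>i. i \<in> {1..N} \<Longrightarrow> R i v \<longleftrightarrow> S (f i) (f v)"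
    using iso v unfolding iso_on_def by auto
  have "f ` {i \<in> {1..N}. R i v} = {y \<in> f ` {1..N}. S y (f v)}"
    using rel by auto
  also have "\<dots> = {i \<in> {1..N}. S i (f v)}"
    using bij by (simp add: bij_betw_def)
  finally have img: "f ` {i \<in> {1..N}. R i v} = {i \<in> {1..N}. S i (f v)}" .
  have "inj_on f {i \<in> {1..N}. R i v}"
    using bij_betw_imp_inj_on[OF bij] by (rule inj_on_subset) auto
  from card_image[OF this] show ?thesis
    by (simp only: img)
qed

definition signature :: "nat list \<Rightarrow> (nat \<times> nat) multiset" where
  "signature w = mset (map (\<lambda>q. (w ! q, lower_before w q)) [0..<length w])"

lemma image_mset_comp_bij:
  assumes "bij_betw h A A"
  shows "image_mset (g \<circ> h) (mset_set A) = image_mset g (mset_set A)"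
proof -
  have "image_mset (g \<circ> h) (mset_set A) = image_mset g (mset_set (h ` A))"
    using assms by (simp add: bij_betw_def image_mset_mset_set flip: multiset.map_comp)
  then show ?thesis
    using assms by (simp add: bij_betw_def)
qed

lemma length_filter_eq_if_mset_eq:
  "mset xs = mset ys \<Longrightarrow> length (filter P xs) = length (filter P ys)"
  by (metis mset_filter size_mset)

text \<open>Both components of the signature are isomorphism invariants of P(w): w_j is the height
  of j, and lower_before is determined by the number of elements below j.\<close>

lemma Pw_iso_signature_eq:
  assumes w1: "dyck_area w1" "length w1 = N" and w2: "dyck_area w2" "length w2 = N"
    and iso: "iso_on N h (Pw w1) (Pw w2)"
  shows "signature w1 = signature w2"
proof -
  have bij: "bij_betw h {1..N} {1..N}"
    using iso unfolding iso_on_def by simp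
  have val: "w2 ! (h i - 1) = w1 ! (i - 1)" if "i \<in> {1..N}" for i
    using iso_on_Pw_values[OF w1(1) w2(1) w1(2) w2(2) iso that] .
  have mset_nth: "mset w = image_mset (\<lambda>i. w ! (i - 1)) (mset_set {1..length w})"
    for w :: "nat list"
    using mset_map_upt_eq_image_mset[of "nth w" "length w"] by (simp add: map_nth)
  have "mset w2 = image_mset (\<lambda>i. w2 ! (i - 1)) (mset_set {1..N})"
    using mset_nth[of w2] w2(2) by simp
  also have "\<dots> = image_mset ((\<lambda>i. w2 ! (i - 1)) \<circ> h) (mset_set {1..N})"
    by (rule image_mset_comp_bij[OF bij, symmetric])
  also have "\<dots> = mset w1"
    using mset_nth[of w1] w1(2) val by (auto intro: image_mset_cong)
  finally have same_letters: "mset w2 = mset w1" .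
  have lower: "lower_before w2 (h i - 1) = lower_before w1 (i - 1)" if i: "i \<in> {1..N}" for i
    using card_below_iso_on[OF iso i] card_Pw_below[OF w1(2) i]
      card_Pw_below[OF w2(2) iso_on_in[OF iso i]] length_filter_eq_if_mset_eq[OF same_letters] val[OF i]
    by simp
  let ?sig = "\<lambda>w i. (w ! (i - 1), lower_before w (i - 1))"
  have "signature w2 = image_mset (?sig w2 \<circ> h) (mset_set {1..N})"
    unfolding signature_def mset_map_upt_eq_image_mset image_mset_comp_bij[OF bij] w2(2) ..
  also have "\<dots> = signature w1"
    unfolding signature_def mset_map_upt_eq_image_mset w1(2)
    using val lower by (auto intro: image_mset_cong)
  finally show ?thesis
    by simp
qed

definition remove_nth :: "nat \<Rightarrow> 'a list \<Rightarrow> 'a list" where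
  "remove_nth p w = take p w @ drop (Suc p) w"

lemma length_remove_nth: "p < length w \<Longrightarrow> length (remove_nth p w) = length w - 1"
  by (simp add: remove_nth_def)

lemma nth_remove_nth:
  "p < length w \<Longrightarrow> i < length w - 1 \<Longrightarrow> remove_nth p w ! i = (if i < p then w ! i else w ! Suc i)"
  by (auto simp: remove_nth_def nth_append min_def)

lemma take_remove_nth: "take p (remove_nth p w) = take p w"
  by (simp add: remove_nth_def) linarith

lemma drop_remove_nth: "p < length w \<Longrightarrow> drop p (remove_nth p w) = drop (Suc p) w"
  by (simp add: remove_nth_def)

lemma remove_nth_reinsert:
  "p < length w \<Longrightarrow> take p (remove_nth p w) @ w ! p # drop p (remove_nth p w) = w"
  by (simp add: take_remove_nth drop_remove_nth id_take_nth_drop[symmetric])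

lemma mset_remove_nth:
  assumes "p < length w"
  shows "mset (remove_nth p w) = mset w - {#w ! p#}"
proof -
  have "mset w = add_mset (w ! p) (mset (remove_nth p w))"
    using arg_cong[OF id_take_nth_drop[OF assms], of mset] by (simp add: remove_nth_def)
  then show ?thesis
    by simp
qed

lemma length_filter_take_mono:
  assumes "q \<le> p"
  shows "length (filter P (take q w)) \<le> length (filter P (take p w))"
proof -
  have "take p w = take q w @ drop q (take p w)"
    using assms by (metis append_take_drop_id min.absorb1 take_take)
  then show ?thesis
    by (metis filter_append length_append le_add1)
qed

definition last_max_pos :: "nat list \<Rightarrow> nat" where
  "last_max_pos w = Max {q. q < length w \<and> w ! q = Max (set w)}"

lemma last_max_pos:
  assumes "w \<noteq> []"
  shows "last_max_pos w < length w" and "w ! last_max_pos w = Max (set w)"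
    and "\<And>q. last_max_pos w < q \<Longrightarrow> q < length w \<Longrightarrow> w ! q < Max (set w)"
proof -
  let ?Q = "{q. q < length w \<and> w ! q = Max (set w)}"
  have fin: "finite ?Q"
    by simp
  have "Max (set w) \<in> set w"
    using assms by (intro Max_in) auto
  then have "?Q \<noteq> {}"
    by (auto simp: in_set_conv_nth)
  then have "last_max_pos w \<in> ?Q"
    unfolding last_max_pos_def using fin by (rule Max_in[rotated])
  then show "last_max_pos w < length w" and "w ! last_max_pos w = Max (set w)"
    by auto
  fix q
  assume q: "last_max_pos w < q" "q < length w"
  have "q \<notin> ?Q"
  proof
    assume "q \<in> ?Q"
    then have "q \<le> last_max_pos w"
      unfolding last_max_pos_def using fin by (rule Max_ge[rotated])
    with q show False
      by simp
  qed
  then show "w ! q < Max (set w)"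
    using q by (simp add: order_less_le)
qed

lemma lower_before_remove_nth:
  assumes p: "p < length w" and q: "q < length w - 1"
    and max: "\<And>i. i < length w \<Longrightarrow> w ! i \<le> w ! p"
  shows "lower_before (remove_nth p w) q = lower_before w (if q < p then q else Suc q)"
proof (cases "q < p")
  case True
  then have "take q (remove_nth p w) = take q w"
    using p by (simp add: remove_nth_def)
  with True show ?thesis
    using nth_remove_nth[OF p q] by (simp add: lower_before_def)
next
  case False
  have "take (Suc q) w = take (Suc q) (take p w @ w ! p # drop (Suc p) w)"
    using id_take_nth_drop[OF p] by simp
  also have "\<dots> = take p w @ take (Suc (q - p)) (w ! p # drop (Suc p) w)"
    using p False by (simp add: take_append min_def Suc_diff_le)
  finally have "take (Suc q) w = take p w @ w ! p # take (q - p) (drop (Suc p) w)"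
    by simp
  moreover have "take q (remove_nth p w) = take p w @ take (q - p) (drop (Suc p) w)"
    using False p by (simp add: remove_nth_def take_append min_def)
  moreover have "Suc (w ! p) \<noteq> w ! Suc q"
    using max[of "Suc q"] q by linarith
  ultimately show ?thesis
    using False nth_remove_nth[OF p q] by (simp add: lower_before_def)
qed

lemma signature_remove_nth:
  assumes p: "p < length w" and max: "\<And>i. i < length w \<Longrightarrow> w ! i \<le> w ! p"
  shows "signature (remove_nth p w) = signature w - {#(w ! p, lower_before w p)#}"
proof -
  let ?sig = "\<lambda>w q. (w ! q, lower_before w q)"
  have "map (?sig (remove_nth p w)) [0..<length (remove_nth p w)] =
        remove_nth p (map (?sig w) [0..<length w])"
  proof (rule nth_equalityI)
    fix i
    assume "i < length (map (?sig (remove_nth p w)) [0..<length (remove_nth p w)])"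
    then have i: "i < length w - 1" and "Suc i < length w"
      using p by (simp_all add: length_remove_nth)
    then show "map (?sig (remove_nth p w)) [0..<length (remove_nth p w)] ! i =
               remove_nth p (map (?sig w) [0..<length w]) ! i"
      using nth_remove_nth[OF p i] nth_remove_nth[of p "map (?sig w) [0..<length w]" i]
        lower_before_remove_nth[OF p i max] p
      by (simp add: length_remove_nth)
  qed (use p in \<open>simp add: length_remove_nth\<close>)
  then show ?thesis
    unfolding signature_def using mset_remove_nth[of p "map (?sig w) [0..<length w]"] p by simp
qed

lemma Max_signature:
  assumes "w \<noteq> []"
  shows "Max (set_mset (signature w)) = (Max (set w), lower_before w (last_max_pos w))"
proof (rule Max_eqI)
  show "finite (set_mset (signature w))"
    by simp
  show "(Max (set w), lower_before w (last_max_pos w)) \<in># signature w"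
    using last_max_pos[OF assms] unfolding signature_def by force
  fix y
  assume "y \<in># signature w"
  then obtain q where q: "q < length w" "y = (w ! q, lower_before w q)"
    unfolding signature_def by auto
  show "y \<le> (Max (set w), lower_before w (last_max_pos w))"
  proof (cases "w ! q = Max (set w)")
    case True
    then have "q \<le> last_max_pos w"
      using last_max_pos(3)[OF assms, of q] q by (cases "last_max_pos w < q") auto
    then have "lower_before w q \<le> lower_before w (last_max_pos w)"
      unfolding lower_before_def using True last_max_pos(2)[OF assms]
      by (simp add: length_filter_take_mono)
    then show ?thesis
      using q True by simp
  next
    case False
    then show ?thesis
      using q by (simp add: order_less_le)
  qed
qed

lemma dyck_area_remove_nth:
  assumes w: "dyck_area w" and p: "p < length w"
    and descent: "Suc p < length w \<Longrightarrow> w ! Suc p < w ! p"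
  shows "dyck_area (remove_nth p w)"
  unfolding dyck_area_iff_nth
proof (intro allI impI)
  have step: "\<And>i. i < length w \<Longrightarrow> w ! i \<le> (if i = 0 then 0 else Suc (w ! (i - 1)))"
    using w by (simp add: dyck_area_iff_nth)
  fix i
  assume "i < length (remove_nth p w)"
  then have i: "i < length w - 1"
    using p by (simp add: length_remove_nth)
  consider "i < p" | "i = p" | "p < i"
    by linarith
  then show "remove_nth p w ! i \<le> (if i = 0 then 0 else Suc (remove_nth p w ! (i - 1)))"
  proof cases
    case 1
    then show ?thesis
      using step[of i] nth_remove_nth[OF p i] nth_remove_nth[OF p, of "i - 1"] i p by auto
  next
    case 2
    then have "w ! Suc p < w ! p"
      using i descent by simp
    then show ?thesis
      using step[of p] nth_remove_nth[OF p i] nth_remove_nth[OF p, of "i - 1"] i p 2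
      by (cases "p = 0") auto
  next
    case 3
    then show ?thesis
      using step[of "Suc i"] nth_remove_nth[OF p i] nth_remove_nth[OF p, of "i - 1"] i by auto
  qed
qed

definition reinsert_pos :: "nat list \<Rightarrow> nat \<Rightarrow> nat \<Rightarrow> nat \<Rightarrow> bool" where
  "reinsert_pos v M C p \<longleftrightarrow> p \<le> length v \<and> length (filter (\<lambda>a. Suc a = M) (take p v)) = C \<and>
     (\<forall>q. p \<le> q \<longrightarrow> q < length v \<longrightarrow> v ! q < M) \<and> (0 < p \<longrightarrow> M \<le> Suc (v ! (p - 1)))"

lemma reinsert_pos_unique:
  assumes "reinsert_pos v M C p1" and "reinsert_pos v M C p2"
  shows "p1 = p2"
proof -
  have False if p1: "reinsert_pos v M C p1" and p2: "reinsert_pos v M C p2" and "p1 < p2" for p1 p2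
  proof -
    have l: "p2 - 1 < length v"
      using p2 \<open>p1 < p2\<close> unfolding reinsert_pos_def by auto
    then have "v ! (p2 - 1) < M" and "M \<le> Suc (v ! (p2 - 1))"
      using p1 p2 \<open>p1 < p2\<close> unfolding reinsert_pos_def by auto
    then have "length (filter (\<lambda>a. Suc a = M) (take p2 v)) =
               Suc (length (filter (\<lambda>a. Suc a = M) (take (p2 - 1) v)))"
      using take_Suc_conv_app_nth[OF l] \<open>p1 < p2\<close> by simp
    moreover have "length (filter (\<lambda>a. Suc a = M) (take p1 v)) \<le>
                   length (filter (\<lambda>a. Suc a = M) (take (p2 - 1) v))"
      using \<open>p1 < p2\<close> by (intro length_filter_take_mono) simp
    ultimately show False
      using p1 p2 unfolding reinsert_pos_def by simp
  qed
  with assms show ?thesis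
    by (metis linorder_neqE_nat)
qed

lemma reinsert_pos_last_max_pos:
  assumes w: "dyck_area w" and "w \<noteq> []"
  shows "reinsert_pos (remove_nth (last_max_pos w) w) (Max (set w))
           (lower_before w (last_max_pos w)) (last_max_pos w)"
proof -
  let ?p = "last_max_pos w"
  let ?v = "remove_nth (last_max_pos w) w"
  note p = last_max_pos[OF \<open>w \<noteq> []\<close>]
  have "?p \<le> length ?v"
    using p(1) length_remove_nth[OF p(1)] by simp
  moreover have "length (filter (\<lambda>a. Suc a = Max (set w)) (take ?p ?v)) = lower_before w ?p"
    unfolding lower_before_def take_remove_nth p(2) ..
  moreover have "?v ! q < Max (set w)" if "?p \<le> q" "q < length ?v" for q
    using nth_remove_nth[OF p(1), of q] p(3)[of "Suc q"] that length_remove_nth[OF p(1)] by simp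
  moreover have "Max (set w) \<le> Suc (?v ! (?p - 1))" if "0 < ?p"
    using w p(1,2) that nth_remove_nth[OF p(1), of "?p - 1"] by (auto simp: dyck_area_iff_nth)
  ultimately show ?thesis
    unfolding reinsert_pos_def by blast
qed


lemma size_signature [simp]: "size (signature w) = length w"
  by (simp add: signature_def)

lemma dyck_area_remove_last_max_pos:
  assumes "dyck_area w" and "w \<noteq> []"
  shows "dyck_area (remove_nth (last_max_pos w) w)"
  using assms(1) last_max_pos(1)[OF assms(2)]
proof (rule dyck_area_remove_nth)
  assume "Suc (last_max_pos w) < length w"
  then show "w ! Suc (last_max_pos w) < w ! last_max_pos w"
    using last_max_pos(3)[OF assms(2) lessI] last_max_pos(2)[OF assms(2)] by (simp only:)
qed

lemma signature_remove_last_max_pos: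
  assumes "w \<noteq> []"
  shows "signature (remove_nth (last_max_pos w) w) = signature w - {#Max (set_mset (signature w))#}"
proof -
  have "w ! i \<le> w ! last_max_pos w" if "i < length w" for i
    using that last_max_pos(2)[OF assms] by simp
  then show ?thesis
    using signature_remove_nth[OF last_max_pos(1)[OF assms]] last_max_pos(2)[OF assms]
      Max_signature[OF assms]
    by simp
qed

theorem signature_inj:
  "dyck_area w1 \<Longrightarrow> dyck_area w2 \<Longrightarrow> signature w1 = signature w2 \<Longrightarrow> w1 = w2"
proof (induction "length w1" arbitrary: w1 w2)
  case 0
  moreover have "length w2 = length w1"
    using arg_cong[OF \<open>signature w1 = signature w2\<close>, of size] by simp
  ultimately show ?case
    by simp
next
  case (Suc N)
  have "length w2 = length w1"
    using arg_cong[OF Suc.prems(3), of size] by simp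
  then have ne: "w1 \<noteq> []" "w2 \<noteq> []"
    using Suc.hyps(2) by auto
  define p1 where "p1 = last_max_pos w1"
  define p2 where "p2 = last_max_pos w2"
  note p1 = last_max_pos[OF ne(1), folded p1_def] and p2 = last_max_pos[OF ne(2), folded p2_def]
  have top: "(Max (set w1), lower_before w1 p1) = (Max (set w2), lower_before w2 p2)"
    unfolding p1_def p2_def Max_signature[OF ne(1), symmetric] Max_signature[OF ne(2), symmetric]
      Suc.prems(3) ..
  have rest: "remove_nth p1 w1 = remove_nth p2 w2"
  proof (rule Suc.hyps(1))
    show "N = length (remove_nth p1 w1)"
      using length_remove_nth[OF p1(1)] Suc.hyps(2) by simp
    show "dyck_area (remove_nth p1 w1)" and "dyck_area (remove_nth p2 w2)"
      unfolding p1_def p2_def using dyck_area_remove_last_max_pos Suc.prems(1,2) ne by auto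
    show "signature (remove_nth p1 w1) = signature (remove_nth p2 w2)"
      unfolding p1_def p2_def signature_remove_last_max_pos[OF ne(1)]
        signature_remove_last_max_pos[OF ne(2)] Suc.prems(3) ..
  qed
  have "reinsert_pos (remove_nth p1 w1) (Max (set w1)) (lower_before w1 p1) p2"
    using reinsert_pos_last_max_pos[OF Suc.prems(2) ne(2), folded p2_def] rest top by simp
  with reinsert_pos_last_max_pos[OF Suc.prems(1) ne(1), folded p1_def] have "p1 = p2"
    by (rule reinsert_pos_unique)
  then show ?case
    using remove_nth_reinsert[OF p1(1)] remove_nth_reinsert[OF p2(1)] p1(2) p2(2) rest top
    by (metis prod.inject)
qed

theorem Pw_iso_unique_area:
  assumes w1: "dyck_area w1" "length w1 = N" and w2: "dyck_area w2" "length w2 = N"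
    and "poset_iso N (Pw w1) R" and "poset_iso N (Pw w2) R"
  shows "w1 = w2"
proof -
  obtain f1 f2 where "iso_on N f1 (Pw w1) R" and "iso_on N f2 (Pw w2) R"
    using assms(5,6) unfolding poset_iso_iff_iso_on by (elim exE)
  then have "iso_on N (inv_into {1..N} f2 \<circ> f1) (Pw w1) (Pw w2)"
    by (intro iso_on_trans iso_on_inv)
  then have "signature w1 = signature w2"
    by (rule Pw_iso_signature_eq[OF w1 w2])
  then show ?thesis
    using signature_inj w1(1) w2(1) by blast
qed

theorem pmap_eq_path_of_area:
  assumes "dyck_area w" and "length w = N" and "poset_iso N (Pw w) R"
  shows "pmap N R = path_of_area w"
  unfolding pmap_def
proof (rule the_equality)
  show "dyck_path N (path_of_area w) \<and> poset_iso N (Pw (area_seq (path_of_area w))) R"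
    using dyck_path_path_of_area[OF assms(1)] area_seq_path_of_area[OF assms(1)] assms(2,3) by simp
  fix D
  assume D: "dyck_path N D \<and> poset_iso N (Pw (area_seq D)) R"
  then have "area_seq D = w"
    using Pw_iso_unique_area[OF dyck_area_area_seq length_area_seq assms(1,2)] assms(3) by blast
  then show "D = path_of_area w"
    using D area_seq_inj[of N D "path_of_area w"] dyck_path_path_of_area[OF assms(1)]
      area_seq_path_of_area[OF assms(1)] assms(2)
    by simp
qed

section \<open>Levels in unit interval orders\<close>

declare level.simps [simp del]

abbreviation uio_level :: "(nat \<Rightarrow> real) \<Rightarrow> nat \<Rightarrow> nat" where
  "uio_level x \<equiv> level (uio_prec x)"

definition pred_count :: "(nat \<Rightarrow> real) \<Rightarrow> nat \<Rightarrow> nat" where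
  "pred_count x j = card {i \<in> {1..<j}. uio_prec x i j}"

lemma sorted_endpointsD: "sorted_endpoints x M \<Longrightarrow> 1 \<le> i \<Longrightarrow> i \<le> j \<Longrightarrow> j \<le> M \<Longrightarrow> x i \<le> x j"
  unfolding sorted_endpoints_def by auto

lemma sorted_endpoints_mono: "sorted_endpoints x M \<Longrightarrow> N \<le> M \<Longrightarrow> sorted_endpoints x N"
  unfolding sorted_endpoints_def by auto

lemma uio_prec_less:
  assumes "sorted_endpoints x M" "i \<in> {1..M}" "j \<in> {1..M}" "uio_prec x i j"
  shows "i < j"
proof (rule ccontr)
  assume "\<not> i < j"
  then have "x j \<le> x i"
    using sorted_endpointsD[OF assms(1), of j i] assms(2,3) by auto
  then show False
    using assms(4) unfolding uio_prec_def by simp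
qed

lemma uio_prec_left:
  assumes "sorted_endpoints x M" "1 \<le> i'" "i' \<le> i" "i \<le> M" "uio_prec x i j"
  shows "uio_prec x i' j"
  using sorted_endpointsD[OF assms(1-4)] assms(5) unfolding uio_prec_def by linarith

lemma preds_eq_atLeastAtMost:
  assumes sorted: "sorted_endpoints x M" and j: "j \<in> {1..M}"
  shows "{i \<in> {1..<j}. uio_prec x i j} = {1..pred_count x j}"
proof (cases "{i \<in> {1..<j}. uio_prec x i j} = {}")
  case True
  then show ?thesis
    unfolding pred_count_def by simp
next
  case False
  define D where "D = {i \<in> {1..<j}. uio_prec x i j}"
  have "finite D"
    unfolding D_def by simp
  then obtain K where K: "K \<in> D" and le: "\<And>i. i \<in> D \<Longrightarrow> i \<le> K"
    using Max_in Max_ge False unfolding D_def[symmetric] by metis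
  have "D = {1..K}"
  proof (intro equalityI subsetI)
    fix i
    assume "i \<in> D"
    then show "i \<in> {1..K}"
      using le[of i] by (simp add: D_def)
  next
    fix i
    assume i: "i \<in> {1..K}"
    have "K < j" "1 \<le> K" "uio_prec x K j"
      using K by (simp_all add: D_def)
    then show "i \<in> D"
      using uio_prec_left[OF sorted, of i K j] i j by (simp add: D_def)
  qed
  then show ?thesis
    unfolding pred_count_def D_def[symmetric] by simp
qed

lemma pred_count_less: "1 \<le> j \<Longrightarrow> pred_count x j < j"
proof -
  assume "1 \<le> j"
  have "pred_count x j \<le> card {1..<j}"
    unfolding pred_count_def by (rule card_mono) auto
  with \<open>1 \<le> j\<close> show ?thesis
    by simp
qed

lemma uio_prec_iff_le_pred_count:
  assumes "sorted_endpoints x M" "i \<in> {1..M}" "j \<in> {1..M}"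
  shows "uio_prec x i j \<longleftrightarrow> i \<le> pred_count x j"
proof -
  have "uio_prec x i j \<longleftrightarrow> i \<in> {i \<in> {1..<j}. uio_prec x i j}"
    using uio_prec_less[OF assms] assms(2) by auto
  also have "\<dots> \<longleftrightarrow> i \<in> {1..pred_count x j}"
    by (simp only: preds_eq_atLeastAtMost[OF assms(1,3)])
  also have "\<dots> \<longleftrightarrow> i \<le> pred_count x j"
    using assms(2) by simp
  finally show ?thesis .
qed

lemma pred_count_mono:
  assumes sorted: "sorted_endpoints x M" and "1 \<le> j" "j \<le> j'" "j' \<le> M"
  shows "pred_count x j \<le> pred_count x j'"
proof (cases "pred_count x j = 0")
  case False
  then have k: "pred_count x j \<in> {1..M}"
    using pred_count_less[of j x] assms by auto
  then have "uio_prec x (pred_count x j) j"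
    using uio_prec_iff_le_pred_count[OF sorted k, of j] assms by simp
  moreover have "x j \<le> x j'"
    using sorted_endpointsD[OF sorted assms(2-4)] .
  ultimately have "uio_prec x (pred_count x j) j'"
    unfolding uio_prec_def by simp
  then show ?thesis
    using uio_prec_iff_le_pred_count[OF sorted k, of j'] assms by simp
qed simp

lemma level_eq_Max:
  assumes "sorted_endpoints x M" and "j \<in> {1..M}"
  shows "uio_level x j = Max (insert 0 ((\<lambda>i. Suc (uio_level x i)) ` {1..pred_count x j}))"
proof -
  have "uio_level x j =
        fold max (map (\<lambda>i. Suc (uio_level x i)) (filter (\<lambda>i. uio_prec x i j) [1..<j])) 0"
    by (rule level.simps)
  also have "\<dots> = Max (insert 0 ((\<lambda>i. Suc (uio_level x i)) ` {i \<in> {1..<j}. uio_prec x i j}))"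
    using Max.set_eq_fold[of 0 "map (\<lambda>i. Suc (uio_level x i))
                                   (filter (\<lambda>i. uio_prec x i j) [1..<j])"]
    by (simp add: image_image)
  finally show ?thesis
    by (simp only: preds_eq_atLeastAtMost[OF assms])
qed

lemma level_mono:
  assumes sorted: "sorted_endpoints x M" and "1 \<le> i" "i \<le> j" "j \<le> M"
  shows "uio_level x i \<le> uio_level x j"
proof -
  have "pred_count x i \<le> pred_count x j"
    using pred_count_mono[OF sorted assms(2-4)] .
  then have "Max (insert 0 ((\<lambda>i. Suc (uio_level x i)) ` {1..pred_count x i}))
           \<le> Max (insert 0 ((\<lambda>i. Suc (uio_level x i)) ` {1..pred_count x j}))"
    by (intro Max_mono) auto
  then show ?thesis
    using level_eq_Max[OF sorted, of i] level_eq_Max[OF sorted, of j] assms by simp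
qed

text \<open>Among the predecessors of j, which form an initial segment, the last one has the
  largest level.\<close>

lemma level_rec:
  assumes sorted: "sorted_endpoints x M" and j: "j \<in> {1..M}"
  shows "uio_level x j = (if pred_count x j = 0 then 0 else Suc (uio_level x (pred_count x j)))"
proof (cases "pred_count x j = 0")
  case True
  then show ?thesis
    using level_eq_Max[OF sorted j] by simp
next
  case False
  have "pred_count x j < j"
    using pred_count_less j by simp
  then have "Max (insert 0 ((\<lambda>i. Suc (uio_level x i)) ` {1..pred_count x j})) =
             Suc (uio_level x (pred_count x j))"
    using False level_mono[OF sorted, of _ "pred_count x j"] j by (intro Max_eqI) auto
  then show ?thesis
    using level_eq_Max[OF sorted j] False by simp
qed

section \<open>Adding an interval on the right\<close>

text \<open>Besides being an isomorphism of U with P(w), f sends every interval to a letter equal to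
  its level and keeps intervals of equal level in order; this pins down where the letter of a
  new interval has to be inserted.\<close>

definition area_model :: "(nat \<Rightarrow> real) \<Rightarrow> nat \<Rightarrow> nat list \<Rightarrow> (nat \<Rightarrow> nat) \<Rightarrow> bool" where
  "area_model x n w f \<longleftrightarrow> dyck_area w \<and> length w = n \<and> iso_on n f (uio_prec x) (Pw w) \<and>
     (\<forall>v\<in>{1..n}. w ! (f v - 1) = uio_level x v) \<and>
     (\<forall>u\<in>{1..n}. \<forall>v\<in>{1..n}. uio_level x u = uio_level x v \<longrightarrow> u < v \<longrightarrow> f u < f v)"

definition insert_at :: "nat \<Rightarrow> 'a \<Rightarrow> 'a list \<Rightarrow> 'a list" where
  "insert_at p a w = take p w @ [a] @ drop p w"

lemma length_insert_at: "p \<le> length w \<Longrightarrow> length (insert_at p a w) = Suc (length w)"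
  by (simp add: insert_at_def)

lemma nth_insert_at:
  "p \<le> length w \<Longrightarrow> q < Suc (length w) \<Longrightarrow>
   insert_at p a w ! q = (if q < p then w ! q else if q = p then a else w ! (q - 1))"
  by (auto simp: insert_at_def nth_append min_def)

definition extend_at :: "nat \<Rightarrow> nat \<Rightarrow> (nat \<Rightarrow> nat) \<Rightarrow> nat \<Rightarrow> nat" where
  "extend_at n p f v = (if v = Suc n then Suc p else if f v \<le> p then f v else Suc (f v))"

locale uio_extension =
  fixes x :: "nat \<Rightarrow> real" and n :: nat and w :: "nat list" and f :: "nat \<Rightarrow> nat"
  assumes sorted: "sorted_endpoints x (Suc n)" and model: "area_model x n w f"
begin

abbreviation "new_level \<equiv> uio_level x (Suc n)"
abbreviation "new_preds \<equiv> pred_count x (Suc n)"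

lemma dyck_area_w: "dyck_area w"
  and length_w: "length w = n"
  and iso: "iso_on n f (uio_prec x) (Pw w)"
  and value_f: "\<And>v. v \<in> {1..n} \<Longrightarrow> w ! (f v - 1) = uio_level x v"
  and same_level_mono:
    "\<And>u v. u \<in> {1..n} \<Longrightarrow> v \<in> {1..n} \<Longrightarrow> uio_level x u = uio_level x v \<Longrightarrow> u < v \<Longrightarrow> f u < f v"
  using model unfolding area_model_def by auto

lemma f_in: "v \<in> {1..n} \<Longrightarrow> f v \<in> {1..n}"
  using iso_on_in[OF iso] .

lemma f_rel: "i \<in> {1..n} \<Longrightarrow> j \<in> {1..n} \<Longrightarrow> uio_prec x i j \<longleftrightarrow> Pw w (f i) (f j)"
  using iso unfolding iso_on_def by blast

lemma f_inj: "u \<in> {1..n} \<Longrightarrow> v \<in> {1..n} \<Longrightarrow> f u = f v \<Longrightarrow> u = v"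
  using iso unfolding iso_on_def bij_betw_def inj_on_def by blast

lemma f_surj: "q \<in> {1..n} \<Longrightarrow> \<exists>v\<in>{1..n}. f v = q"
  using iso unfolding iso_on_def bij_betw_def by (metis imageE)

lemma level_le_new_level: "u \<in> {1..n} \<Longrightarrow> uio_level x u \<le> new_level"
  using level_mono[OF sorted, of u "Suc n"] by auto

lemma new_preds_le: "new_preds \<le> n"
  using pred_count_less[of "Suc n" x] by simp

lemma new_level_rec: "new_level = (if new_preds = 0 then 0 else Suc (uio_level x new_preds))"
  using level_rec[OF sorted, of "Suc n"] by simp

lemma new_preds_less_if_same_level: "u \<in> {1..n} \<Longrightarrow> uio_level x u = new_level \<Longrightarrow> new_preds < u"
  using level_mono[OF sorted, of u new_preds] new_level_rec new_preds_le
  by (cases "u \<le> new_preds") auto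

lemma le_new_preds_if_low_level: "u \<in> {1..n} \<Longrightarrow> uio_level x u + 2 \<le> new_level \<Longrightarrow> u \<le> new_preds"
  using level_mono[OF sorted, of new_preds u] new_level_rec
  by (cases "new_preds = 0"; cases "u \<le> new_preds") auto

lemma letter_le_new_level: "q < n \<Longrightarrow> w ! q \<le> new_level"
  using f_surj[of "Suc q"] value_f level_le_new_level by force


definition must_precede :: "nat set" where
  "must_precede = f ` {u \<in> {1..n}. uio_level x u = new_level \<or>
                                  Suc (uio_level x u) = new_level \<and> u \<le> new_preds}"

text \<open>The new letter goes right behind every letter that has to stay in front of it: letters of
  intervals on the new level, so that equal levels stay in order, and letters of predecessors of
  n + 1 on the level below, which must precede it in P(w).\<close>

definition insert_pos :: nat where
  "insert_pos = Max (insert 0 must_precede)"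

lemma must_precede_subset: "must_precede \<subseteq> {1..n}"
  unfolding must_precede_def using f_in by blast

lemma finite_must_precede: "finite (insert 0 must_precede)"
  using finite_subset[OF must_precede_subset] by simp

lemma insert_pos_le: "insert_pos \<le> n"
  unfolding insert_pos_def using finite_must_precede must_precede_subset
  by (intro Max.boundedI) auto

lemma le_insert_pos: "s \<in> must_precede \<Longrightarrow> s \<le> insert_pos"
  unfolding insert_pos_def using finite_must_precede by simp

lemma f_in_must_precede:
  "u \<in> {1..n} \<Longrightarrow> uio_level x u = new_level \<or> Suc (uio_level x u) = new_level \<and> u \<le> new_preds \<Longrightarrow>
   f u \<in> must_precede"
  unfolding must_precede_def by (rule imageI) simp

lemma f_le_insert_pos_if_same_level:
  "u \<in> {1..n} \<Longrightarrow> uio_level x u = new_level \<Longrightarrow> f u \<le> insert_pos"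
  using le_insert_pos f_in_must_precede by blast

lemma must_precede_less:
  assumes u: "u \<in> {1..n}" and level_u: "Suc (uio_level x u) = new_level"
    and after: "new_preds < u" and s: "s \<in> must_precede"
  shows "s < f u"
proof -
  obtain u' where u': "u' \<in> {1..n}" "s = f u'"
      "uio_level x u' = new_level \<or> Suc (uio_level x u') = new_level \<and> u' \<le> new_preds"
    using s unfolding must_precede_def by blast
  show ?thesis
  proof (cases "uio_level x u' = new_level")
    case True
    \<comment> \<open>u lies to the right of every predecessor of n + 1, hence of every predecessor of u'\<close>
    have "pred_count x u' \<le> new_preds"
      using pred_count_mono[OF sorted, of u' "Suc n"] u' by auto
    then have "\<not> uio_prec x u u'"
      using uio_prec_iff_le_pred_count[OF sorted, of u u'] u u' after by auto
    then have "\<not> Pw w (f u) (f u')"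
      using f_rel[OF u u'(1)] by simp
    moreover have "f u \<noteq> f u'"
      using f_inj[OF u u'(1)] level_u True by auto
    ultimately show ?thesis
      using value_f[OF u] value_f[OF u'(1)] True level_u u'(2) unfolding Pw_def by auto
  next
    case False
    then show ?thesis
      using same_level_mono[OF u'(1) u] u' level_u after by simp
  qed
qed

lemma f_le_insert_pos_iff:
  assumes u: "u \<in> {1..n}" and level_u: "Suc (uio_level x u) = new_level"
  shows "f u \<le> insert_pos \<longleftrightarrow> u \<le> new_preds"
proof
  show "u \<le> new_preds \<Longrightarrow> f u \<le> insert_pos"
    using le_insert_pos f_in_must_precede u level_u by blast
  assume before: "f u \<le> insert_pos"
  show "u \<le> new_preds"
  proof (rule ccontr)
    assume "\<not> u \<le> new_preds"
    then have "\<forall>s \<in> insert 0 must_precede. s < f u"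
      using must_precede_less[OF u level_u] f_in[OF u] by auto
    then have "insert_pos < f u"
      unfolding insert_pos_def using finite_must_precede by simp
    with before show False
      by simp
  qed
qed

lemma new_level_eq_0_if_insert_pos_eq_0: "insert_pos = 0 \<Longrightarrow> new_level = 0"
proof (rule ccontr)
  assume "insert_pos = 0" and "new_level \<noteq> 0"
  then have k: "new_preds \<in> {1..n}" and "Suc (uio_level x new_preds) = new_level"
    using new_level_rec new_preds_le by (auto split: if_splits)
  then have "f new_preds \<le> insert_pos"
    using f_le_insert_pos_iff[OF k] by simp
  then show False
    using f_in[OF k] \<open>insert_pos = 0\<close> by simp
qed

lemma letter_before_insert_pos:
  assumes "0 < insert_pos"
  shows "w ! (insert_pos - 1) = new_level \<or> Suc (w ! (insert_pos - 1)) = new_level"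
proof -
  have "insert_pos \<in> must_precede"
    using assms Max_in[OF finite_must_precede] unfolding insert_pos_def by fastforce
  then obtain u where "u \<in> {1..n}" "insert_pos = f u"
      "uio_level x u = new_level \<or> Suc (uio_level x u) = new_level"
    unfolding must_precede_def by blast
  then show ?thesis
    using value_f by auto
qed


abbreviation "new_w \<equiv> insert_at insert_pos new_level w"
abbreviation "new_f \<equiv> extend_at n insert_pos f"

lemma length_new_w: "length new_w = Suc n"
  using insert_pos_le length_w by (simp add: length_insert_at)

lemma nth_new_w:
  "q < Suc n \<Longrightarrow>
   new_w ! q = (if q < insert_pos then w ! q else if q = insert_pos then new_level else w ! (q - 1))"
  using nth_insert_at[of insert_pos w q new_level] insert_pos_le length_w by simp

lemma dyck_area_new_w: "dyck_area new_w"
  unfolding dyck_area_iff_nth length_new_w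
proof (intro allI impI)
  fix q
  assume q: "q < Suc n"
  have step: "\<And>i. i < n \<Longrightarrow> w ! i \<le> (if i = 0 then 0 else Suc (w ! (i - 1)))"
    using dyck_area_w length_w unfolding dyck_area_iff_nth by blast
  consider "q < insert_pos" | "q = insert_pos" | "q = Suc insert_pos" | "Suc insert_pos < q"
    by linarith
  then show "new_w ! q \<le> (if q = 0 then 0 else Suc (new_w ! (q - 1)))"
  proof cases
    case 1
    then show ?thesis
      using nth_new_w[OF q] nth_new_w[of "q - 1"] step[of q] insert_pos_le q by auto
  next
    case 2
    then show ?thesis
      using nth_new_w[OF q] nth_new_w[of "q - 1"] new_level_eq_0_if_insert_pos_eq_0
        letter_before_insert_pos q
      by (cases "insert_pos = 0") auto
  next
    case 3
    then show ?thesis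
      using nth_new_w[OF q] nth_new_w[of "q - 1"] letter_le_new_level[of "q - 1"] q by auto
  next
    case 4
    then show ?thesis
      using nth_new_w[OF q] nth_new_w[of "q - 1"] step[of "q - 1"] q by auto
  qed
qed

lemma new_f_old: "v \<in> {1..n} \<Longrightarrow> new_f v = (if f v \<le> insert_pos then f v else Suc (f v))"
  unfolding extend_at_def by simp

lemma new_f_new: "new_f (Suc n) = Suc insert_pos"
  unfolding extend_at_def by simp

lemma value_new_f_new: "new_w ! (new_f (Suc n) - 1) = new_level"
  using new_f_new nth_new_w[of insert_pos] insert_pos_le by simp

lemma new_f_less_iff: "u \<in> {1..n} \<Longrightarrow> v \<in> {1..n} \<Longrightarrow> new_f u < new_f v \<longleftrightarrow> f u < f v"
  by (simp add: new_f_old)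

lemma value_new_f_old:
  assumes v: "v \<in> {1..n}"
  shows "new_w ! (new_f v - 1) = w ! (f v - 1)"
proof (cases "f v \<le> insert_pos")
  case True
  have "f v - 1 < Suc n"
    using f_in[OF v] by auto
  with True show ?thesis
    using nth_new_w[of "f v - 1"] f_in[OF v] new_f_old[OF v] by simp
next
  case False
  have "f v < Suc n"
    using f_in[OF v] by auto
  with False show ?thesis
    using nth_new_w[of "f v"] new_f_old[OF v] by simp
qed

lemma new_f_in:
  assumes v: "v \<in> {1..Suc n}"
  shows "new_f v \<in> {1..Suc n}"
proof (cases "v = Suc n")
  case True
  then show ?thesis
    using new_f_new insert_pos_le by simp
next
  case False
  then have "v \<in> {1..n}"
    using v by auto
  then show ?thesis
    using new_f_old[of v] f_in[of v] by auto
qed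

lemma new_f_eq_new_iff:
  assumes v: "v \<in> {1..Suc n}"
  shows "new_f v = Suc insert_pos \<longleftrightarrow> v = Suc n"
proof (cases "v = Suc n")
  case False
  then have "v \<in> {1..n}"
    using v by auto
  then show ?thesis
    using new_f_old[of v] False by auto
qed (simp add: new_f_new)

lemma inj_on_new_f: "inj_on new_f {1..Suc n}"
proof (rule inj_onI)
  fix u v
  assume u: "u \<in> {1..Suc n}" and v: "v \<in> {1..Suc n}" and eq: "new_f u = new_f v"
  have iff: "u = Suc n \<longleftrightarrow> v = Suc n"
    by (simp only: new_f_eq_new_iff[OF u, symmetric] eq new_f_eq_new_iff[OF v])
  show "u = v"
  proof (cases "u = Suc n")
    case True
    then show ?thesis
      using iff by simp
  next
    case False
    with iff u v have u': "u \<in> {1..n}" and v': "v \<in> {1..n}"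
      by auto
    then have "f u = f v"
      using eq new_f_old[OF u'] new_f_old[OF v'] by (auto split: if_splits)
    then show ?thesis
      by (rule f_inj[OF u' v'])
  qed
qed

lemma bij_new_f: "bij_betw new_f {1..Suc n} {1..Suc n}"
proof -
  have "new_f ` {1..Suc n} \<subseteq> {1..Suc n}"
    using new_f_in by (rule image_subsetI)
  moreover have "card (new_f ` {1..Suc n}) = card {1..Suc n}"
    using card_image[OF inj_on_new_f] .
  ultimately have "new_f ` {1..Suc n} = {1..Suc n}"
    using card_subset_eq[of "{1..Suc n}" "new_f ` {1..Suc n}"] by simp
  then show ?thesis
    using inj_on_new_f unfolding bij_betw_def by simp
qed

lemma value_new_f: "v \<in> {1..Suc n} \<Longrightarrow> new_w ! (new_f v - 1) = uio_level x v"
  using value_new_f_new value_new_f_old value_f by (cases "v = Suc n") auto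

lemma uio_prec_new_iff:
  assumes i: "i \<in> {1..n}"
  shows "uio_prec x i (Suc n) \<longleftrightarrow> Pw new_w (new_f i) (new_f (Suc n))"
proof -
  have prec: "uio_prec x i (Suc n) \<longleftrightarrow> i \<le> new_preds"
    using uio_prec_iff_le_pred_count[OF sorted, of i "Suc n"] i by simp
  have letters: "new_w ! (new_f i - 1) = uio_level x i" "new_w ! (new_f (Suc n) - 1) = new_level"
    using value_new_f i by auto
  consider "uio_level x i + 2 \<le> new_level" | "Suc (uio_level x i) = new_level"
    | "uio_level x i = new_level"
    using level_le_new_level[OF i] by linarith
  then show ?thesis
  proof cases
    case 1
    then show ?thesis
      using prec le_new_preds_if_low_level[OF i] letters unfolding Pw_def by auto
  next
    case 2
    have "new_f i < new_f (Suc n) \<longleftrightarrow> f i \<le> insert_pos"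
      using new_f_old[OF i] new_f_new by auto
    then show ?thesis
      using prec f_le_insert_pos_iff[OF i 2] letters 2 unfolding Pw_def by auto
  next
    case 3
    then show ?thesis
      using prec new_preds_less_if_same_level[OF i] letters unfolding Pw_def by auto
  qed
qed

lemma uio_prec_iff_Pw_new:
  assumes i: "i \<in> {1..Suc n}" and j: "j \<in> {1..Suc n}"
  shows "uio_prec x i j \<longleftrightarrow> Pw new_w (new_f i) (new_f j)"
proof (cases "i = Suc n"; cases "j = Suc n")
  assume "i = Suc n" "j = Suc n"
  then show ?thesis
    unfolding uio_prec_def Pw_def by simp
next
  assume ij: "i = Suc n" "j \<noteq> Suc n"
  then have "\<not> uio_prec x i j"
    using uio_prec_less[OF sorted i j] j by auto
  moreover have "\<not> Pw new_w (new_f i) (new_f j)"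
    using value_new_f[OF i] value_new_f[OF j] level_le_new_level[of j] ij j
    unfolding Pw_def by auto
  ultimately show ?thesis
    by simp
next
  assume "i \<noteq> Suc n" "j = Suc n"
  then show ?thesis
    using uio_prec_new_iff[of i] i by auto
next
  assume "i \<noteq> Suc n" "j \<noteq> Suc n"
  then have i': "i \<in> {1..n}" and j': "j \<in> {1..n}"
    using i j by auto
  have "uio_prec x i j \<longleftrightarrow> Pw w (f i) (f j)"
    using f_rel[OF i' j'] .
  also have "\<dots> \<longleftrightarrow> Pw new_w (new_f i) (new_f j)"
    unfolding Pw_def using value_new_f_old[OF i'] value_new_f_old[OF j'] new_f_less_iff[OF i' j']
    by simp
  finally show ?thesis .
qed

lemma new_f_same_level_mono:
  assumes u: "u \<in> {1..Suc n}" and v: "v \<in> {1..Suc n}"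
    and same: "uio_level x u = uio_level x v" and "u < v"
  shows "new_f u < new_f v"
proof -
  have u': "u \<in> {1..n}"
    using u v \<open>u < v\<close> by auto
  show ?thesis
  proof (cases "v = Suc n")
    case True
    then have "f u \<le> insert_pos"
      using f_le_insert_pos_if_same_level[OF u'] same by simp
    then show ?thesis
      using True new_f_old[OF u'] new_f_new by simp
  next
    case False
    then have v': "v \<in> {1..n}"
      using v by auto
    then show ?thesis
      using new_f_less_iff[OF u' v'] same_level_mono[OF u' v' same \<open>u < v\<close>] by simp
  qed
qed

theorem area_model_extend: "area_model x (Suc n) new_w new_f"
  unfolding area_model_def iso_on_def
  using dyck_area_new_w length_new_w bij_new_f uio_prec_iff_Pw_new value_new_f new_f_same_level_mono
  by blast

lemma letters_le_new_level: "a \<in> set w \<Longrightarrow> a \<le> new_level"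
  using letter_le_new_level length_w by (auto simp: in_set_conv_nth)

lemma new_level_notin_drop: "new_level \<notin> set (drop insert_pos w)"
proof
  assume "new_level \<in> set (drop insert_pos w)"
  then obtain i where "i < length (drop insert_pos w)" "drop insert_pos w ! i = new_level"
    by (auto simp: in_set_conv_nth)
  then have q: "insert_pos + i < n" "w ! (insert_pos + i) = new_level"
    using insert_pos_le length_w by auto
  then obtain v where v: "v \<in> {1..n}" "f v = Suc (insert_pos + i)"
    using f_surj[of "Suc (insert_pos + i)"] by auto
  then have "uio_level x v = new_level"
    using value_f[OF v(1)] q by simp
  then have "f v \<le> insert_pos"
    using f_le_insert_pos_if_same_level[OF v(1)] by simp
  with v show False
    by simp
qed

end


lemma area_model_exists: "sorted_endpoints x N \<Longrightarrow> \<exists>w f. area_model x N w f"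
proof (induction N)
  case 0
  have "area_model x 0 [] id"
    unfolding area_model_def iso_on_def dyck_area_def by simp
  then show ?case
    by blast
next
  case (Suc n)
  then obtain w f where "area_model x n w f"
    using sorted_endpoints_mono[of x "Suc n" n] by auto
  then interpret uio_extension x n w f
    using Suc.prems by unfold_locales
  show ?case
    using area_model_extend by blast
qed

lemma pmap_eq_path_of_area_model:
  assumes "area_model x N w f"
  shows "pmap N (uio_prec x) = path_of_area w"
proof -
  have "iso_on N (inv_into {1..N} f) (Pw w) (uio_prec x)"
    using assms iso_on_inv unfolding area_model_def by blast
  then show ?thesis
    using assms pmap_eq_path_of_area unfolding area_model_def poset_iso_iff_iso_on by blast
qed

section \<open>The final peak\<close>

definition level_words :: "nat list \<Rightarrow> nat \<Rightarrow> bool list" where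
  "level_words w K = concat (map (\<lambda>k. level_word k w) [0..<K])"

lemma level_words_Suc: "level_words w (Suc K) = level_words w K @ level_word K w"
  by (simp add: level_words_def)

lemma level_words_Nil [simp]: "level_words [] K = []"
  by (simp add: level_words_def level_word_def)

lemma zeta_path_of_area:
  assumes "dyck_area w"
  shows "zeta (path_of_area w) = level_words w (Suc (2 * length w))"
  using zeta_eq_level_words[OF dyck_path_path_of_area[OF assms]] area_seq_path_of_area[OF assms]
    dyck_path_path_of_area[OF assms]
  by (simp add: dyck_path_def level_words_def)

lemma length_level_words:
  "length (level_words w K) = length (filter (\<lambda>a. a < K) w) + length (filter (\<lambda>a. Suc a < K) w)"
proof (induction K)
  case (Suc K)
  have "length (filter (\<lambda>a. a < Suc K) w) =
        length (filter (\<lambda>a. a < K) w) + length (filter (\<lambda>a. a = K) w)"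
    and "length (filter (\<lambda>a. Suc a < Suc K) w) =
        length (filter (\<lambda>a. Suc a < K) w) + length (filter (\<lambda>a. Suc a = K) w)"
    and "length (filter (\<lambda>a. a = K \<or> Suc a = K) w) =
        length (filter (\<lambda>a. a = K) w) + length (filter (\<lambda>a. Suc a = K) w)"
    by (induction w) auto
  with Suc show ?case
    by (simp add: level_words_Suc level_word_def)
qed (simp add: level_words_def)

lemma count_level_words: "count_list (level_words w K) True = length (filter (\<lambda>a. a < K) w)"
proof (induction K)
  case (Suc K)
  have "count_list (level_word K w) True = length (filter (\<lambda>a. a = K) w)"
    and "length (filter (\<lambda>a. a < Suc K) w) =
        length (filter (\<lambda>a. a < K) w) + length (filter (\<lambda>a. a = K) w)"
    by (induction w) (auto simp: level_word_def)
  with Suc show ?case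
    by (simp add: level_words_Suc)
qed (simp add: level_words_def)

lemma level_word_eq_Nil: "\<forall>a\<in>set w. a \<le> L \<Longrightarrow> Suc (Suc L) \<le> k \<Longrightarrow> level_word k w = []"
  unfolding level_word_def by (induction w) auto

lemma level_words_truncate:
  assumes "\<forall>a\<in>set w. a \<le> L" and "Suc (Suc L) \<le> K"
  shows "level_words w K = level_words w (Suc (Suc L))"
  using assms(2)
  by (induction K rule: dec_induct) (simp_all add: level_words_Suc level_word_eq_Nil[OF assms(1)])

lemma level_word_above_max:
  "\<forall>a\<in>set w. a \<le> L \<Longrightarrow> level_word (Suc L) w = replicate (count_list w L) False"
  unfolding level_word_def by (induction w) auto

lemma level_word_without_letter:
  "L \<notin> set w \<Longrightarrow> level_word L w = replicate (length (filter (\<lambda>a. Suc a = L) w)) False"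
  unfolding level_word_def by (induction w) auto

lemma level_words_insert:
  assumes le: "\<forall>a\<in>set w. a \<le> L" and notin: "L \<notin> set (drop p w)"
  defines "B \<equiv> level_words w L @ level_word L (take p w)"
    and "r \<equiv> count_list w L + length (filter (\<lambda>a. Suc a = L) (drop p w))"
  shows "level_words w (Suc (Suc L)) = B @ replicate r False"
    and "level_words (take p w @ [L] @ drop p w) (Suc (Suc L)) = B @ True # replicate (Suc r) False"
proof -
  let ?w' = "take p w @ [L] @ drop p w"
  define e where "e = length (filter (\<lambda>a. Suc a = L) (drop p w))"
  have lower: "level_words ?w' L = level_words w L"
    unfolding level_words_def
  proof (intro arg_cong[where f = concat] map_cong refl)
    fix k
    assume "k \<in> set [0..<L]"
    then have "level_word k [L] = []"
      by (simp add: level_word_singleton)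
    then show "level_word k ?w' = level_word k w"
      by (metis append_Nil append_take_drop_id level_word_append)
  qed
  have L_w: "level_word L w = level_word L (take p w) @ replicate e False"
    using level_word_without_letter[OF notin] level_word_append[of L "take p w" "drop p w"]
    unfolding e_def by simp
  have L_w': "level_word L ?w' = level_word L (take p w) @ True # replicate e False"
    using level_word_without_letter[OF notin] level_word_append[of L "[L]" "drop p w"]
    unfolding e_def by (simp add: level_word_singleton)
  have le': "\<forall>a\<in>set ?w'. a \<le> L"
    using le by (auto dest: in_set_takeD in_set_dropD)
  have "count_list ?w' L = Suc (count_list w L)"
    using count_list_append[of "take p w" "drop p w" L] by simp
  then have Suc_L_w': "level_word (Suc L) ?w' = replicate (Suc (count_list w L)) False"
    using level_word_above_max[OF le'] by simp
  show "level_words w (Suc (Suc L)) = B @ replicate r False"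
    using L_w level_word_above_max[OF le] unfolding B_def r_def e_def
    by (simp add: level_words_Suc replicate_add[symmetric] add.commute)
  show "level_words ?w' (Suc (Suc L)) = B @ True # replicate (Suc r) False"
    using lower L_w' Suc_L_w' unfolding B_def r_def e_def
    by (simp add: level_words_Suc replicate_app_Cons_same replicate_add[symmetric] add.commute)
qed

lemma add_final_peakI:
  assumes "length B = n + i" and "count_list B True = n" and "i \<le> n"
  shows "add_final_peak n (B @ replicate (n - i) False) i (B @ True # replicate (Suc n - i) False)"
  using assms unfolding add_final_peak_def by simp

lemma zeta_path_of_area_length_count:
  assumes "dyck_area w"
  shows "length (zeta (path_of_area w)) = 2 * length w"
    and "count_list (zeta (path_of_area w)) True = length w"
proof -
  have bound: "a < 2 * length w" if "a \<in> set w" for a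
    using that dyck_area_nth_le[OF assms] by (fastforce simp: in_set_conv_nth)
  then have "\<forall>a\<in>set w. a < Suc (2 * length w)" and "\<forall>a\<in>set w. Suc a < Suc (2 * length w)"
    by (auto simp: less_SucI)
  then show "length (zeta (path_of_area w)) = 2 * length w"
    and "count_list (zeta (path_of_area w)) True = length w"
    unfolding zeta_path_of_area[OF assms] length_level_words count_level_words
    by (simp_all add: filter_True)
qed

lemma zeta_path_of_area_eq_level_words:
  assumes w: "dyck_area w" and le: "\<forall>a\<in>set w. a \<le> L" and "L \<le> length w"
  shows "zeta (path_of_area w) = level_words w (Suc (Suc L))"
proof (cases "w = []")
  case False
  then have "Suc (Suc L) \<le> Suc (2 * length w)"
    using \<open>L \<le> length w\<close> by (cases w) auto
  then have "level_words w (Suc (2 * length w)) = level_words w (Suc (Suc L))"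
    by (rule level_words_truncate[OF le])
  then show ?thesis
    using zeta_path_of_area[OF w] by simp
qed (use zeta_path_of_area[OF w] in simp)

theorem add_final_peak_zeta_insert:
  assumes w: "dyck_area w" and w': "dyck_area (take p w @ [L] @ drop p w)" and p: "p \<le> length w"
    and le: "\<forall>a\<in>set w. a \<le> L" and notin: "L \<notin> set (drop p w)"
  defines "r \<equiv> count_list w L + length (filter (\<lambda>a. Suc a = L) (drop p w))"
  shows "r \<le> length w \<and>
    add_final_peak (length w) (zeta (path_of_area w)) (length w - r)
      (zeta (path_of_area (take p w @ [L] @ drop p w)))"
proof -
  let ?w' = "take p w @ [L] @ drop p w"
  let ?n = "length w"
  define B where "B = level_words w L @ level_word L (take p w)"
  have "L \<le> p"
    using dyck_area_nth_le[OF w', of p] p by (simp add: nth_append)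
  have le': "\<forall>a\<in>set ?w'. a \<le> L"
    using le by (auto dest: in_set_takeD in_set_dropD)
  have "L \<le> length w" and "L \<le> length ?w'"
    using \<open>L \<le> p\<close> p by simp_all
  then have zeta_w: "zeta (path_of_area w) = B @ replicate r False"
    and zeta_w': "zeta (path_of_area ?w') = B @ True # replicate (Suc r) False"
    using zeta_path_of_area_eq_level_words[OF w le] zeta_path_of_area_eq_level_words[OF w' le']
      level_words_insert[OF le notin]
    unfolding B_def r_def by simp_all
  have "length B + r = 2 * ?n" and "count_list B True = ?n"
    using zeta_path_of_area_length_count[OF w] zeta_w by simp_all
  moreover have "count_list B True \<le> length B"
    by (rule count_le_length)
  ultimately have "r \<le> ?n" and "length B = ?n + (?n - r)"
    by linarith+
  with \<open>count_list B True = ?n\<close> show ?thesis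
    using add_final_peakI[of B ?n "?n - r"] zeta_w zeta_w' by (simp add: Suc_diff_le)
qed

context uio_extension
begin

lemma pmap_eq_path_of_area:
  shows "pmap n (uio_prec x) = path_of_area w" and "pmap (Suc n) (uio_prec x) = path_of_area new_w"
  using pmap_eq_path_of_area_model[OF model] pmap_eq_path_of_area_model[OF area_model_extend] .

lemma drop_Suc_insert_pos_new_w: "drop (Suc insert_pos) new_w = drop insert_pos w"
  using insert_pos_le length_w by (simp add: insert_at_def)

theorem add_final_peak_zeta_pmap:
  "let r = count_list w new_level + length (filter (\<lambda>a. Suc a = new_level) (drop insert_pos w))
   in r \<le> n \<and> add_final_peak n (zeta (pmap n (uio_prec x))) (n - r) (zeta (pmap (Suc n) (uio_prec x)))"
proof -
  have "insert_pos \<le> length w"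
    using insert_pos_le length_w by simp
  moreover have "\<forall>a\<in>set w. a \<le> new_level"
    using letters_le_new_level by blast
  ultimately have
    "let r = count_list w new_level + length (filter (\<lambda>a. Suc a = new_level) (drop insert_pos w))
     in r \<le> length w \<and>
        add_final_peak (length w) (zeta (path_of_area w)) (length w - r) (zeta (path_of_area new_w))"
    unfolding Let_def insert_at_def
    by (intro add_final_peak_zeta_insert dyck_area_w dyck_area_new_w[unfolded insert_at_def]
        new_level_notin_drop)
  then show ?thesis
    unfolding pmap_eq_path_of_area by (simp only: length_w)
qed

end

theorem mainTheorem8:
  fixes x :: "nat \<Rightarrow> real" and n :: nat
  assumes "sorted_endpoints x (Suc n)"
  defines "lv \<equiv> level (uio_prec x) (Suc n)"
      and "w \<equiv> area_seq (pmap n (uio_prec x))"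
      and "w' \<equiv> area_seq (pmap (Suc n) (uio_prec x))"
  shows "\<exists>j \<le> n. w' = take j w @ [lv] @ drop j w \<and>
           (let r = count_list w lv +
                    length (filter (\<lambda>a. int a = int lv - 1) (drop (Suc j) w'))
            in r \<le> n \<and> add_final_peak n (zeta (pmap n (uio_prec x))) (n - r)
                        (zeta (pmap (Suc n) (uio_prec x))))"
proof -
  obtain v f where model: "area_model x n v f"
    using area_model_exists sorted_endpoints_mono[OF assms(1)] by (metis le_SucI order_refl)
  interpret uio_extension x n v f
    using assms(1) model by unfold_locales
  have w: "w = v" and w': "w' = insert_at insert_pos lv v"
    unfolding w_def w'_def lv_def pmap_eq_path_of_area
    by (simp_all add: area_seq_path_of_area dyck_area_w dyck_area_new_w)
  have "(\<lambda>a. int a = int lv - 1) = (\<lambda>a. Suc a = lv)"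
    by (intro ext) arith
  then show ?thesis
    using insert_pos_le add_final_peak_zeta_pmap drop_Suc_insert_pos_new_w
    unfolding w w' lv_def insert_at_def by auto
qed

end
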